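(* Let $\Omega$ be an infinite locally compact metric space, $T:\Omega\to\Omega$ continuous, and $\nu$ a nonzero Radon measure on $(\Omega,\mathcal{B}(\Omega))$. If the dynamical system $(\Omega,T)$ is chaotic with respect to $\nu$, then it is topologically transitive.
   Context: $(\Omega,T)$ is chaotic with respect to $\nu$ if for $\nu$-almost every $x_0\in\Omega$ and every nonempty open $U\subset\Omega$ there is $n\in\mathbb{N}$ with $T^n(x_0)\in U$. $(\Omega,T)$ is topologically transitive if for all nonempty open sets $U,V\subset\Omega$ there exists $n\ge0$ with $T^{-n}(U)\cap V\neq\emptyset$. *)

theory Defs
  imports "HOL-Analysis.Analysis"
begin

definition radon_measure :: "'a::metric_space measure \<Rightarrow> bool" where
  "radon_measure M \<longleftrightarrow>
     sets M = sets borel \<and>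
     (\<forall>K. compact K \<longrightarrow> emeasure M K < \<infinity>) \<and>
     (\<forall>A\<in>sets M. emeasure M A = (INF U\<in>{U. open U \<and> A \<subseteq> U}. emeasure M U)) \<and>
     (\<forall>U. open U \<longrightarrow> emeasure M U = (SUP K\<in>{K. compact K \<and> K \<subseteq> U}. emeasure M K))"

definition chaotic_wrt :: "'a::topological_space measure \<Rightarrow> ('a \<Rightarrow> 'a) \<Rightarrow> bool" where
  "chaotic_wrt \<nu> T \<longleftrightarrow>
     (AE x in \<nu>. \<forall>U. open U \<and> U \<noteq> {} \<longrightarrow> (\<exists>n\<ge>1. (T ^^ n) x \<in> U))"

definition topologically_transitive :: "('a::topological_space \<Rightarrow> 'a) \<Rightarrow> bool" where
  "topologically_transitive T \<longleftrightarrow>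
     (\<forall>U V. open U \<and> U \<noteq> {} \<and> open V \<and> V \<noteq> {} \<longrightarrow>
        (\<exists>n::nat. (T ^^ n) -` U \<inter> V \<noteq> {}))"

end

theory Submission
  imports Defs
begin

text \<open>Since \<open>\<nu>\<close> is nonzero, chaos yields a single point \<open>x\<close> whose forward orbit meets every
nonempty open set. Such a point is not isolated: otherwise \<open>T\<^sup>q x = x\<close> for some \<open>q \<ge> 1\<close>, the orbit is
finite, and its nonempty open complement (the space is infinite) is never visited. Hence every
open neighbourhood \<open>W\<close> of \<open>x\<close> is infinite; applied to \<open>W = (T\<^sup>j)\<inverse> U\<close> minus finitely many orbit
points, this shows that the orbit enters \<open>U\<close> at arbitrarily late times. So if \<open>T\<^sup>m x \<in> V\<close>, then
\<open>T\<^sup>n x \<in> U\<close> for some \<open>n > m\<close>, and \<open>T\<^sup>m x\<close> is a point of \<open>V\<close> mapped into \<open>U\<close> by \<open>T\<^sup>n\<^sup>-\<^sup>m\<close>.\<close>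

definition dense_forward_orbit :: "('a::topological_space \<Rightarrow> 'a) \<Rightarrow> 'a \<Rightarrow> bool" where
  "dense_forward_orbit T x \<longleftrightarrow> (\<forall>U. open U \<and> U \<noteq> {} \<longrightarrow> (\<exists>n\<ge>1. (T ^^ n) x \<in> U))"

lemma chaotic_wrt_iff_AE_dense_forward_orbit:
  "chaotic_wrt \<nu> T \<longleftrightarrow> (AE x in \<nu>. dense_forward_orbit T x)"
  unfolding chaotic_wrt_def dense_forward_orbit_def ..

lemma continuous_on_funpow:
  assumes "continuous_on S T" and "T ` S \<subseteq> S"
  shows "continuous_on S (T ^^ n)"
proof (induction n)
  case 0
  then show ?case by (simp add: continuous_on_id)
next
  case (Suc n)
  have "continuous_on S ((T ^^ n) \<circ> T)"
    using assms Suc.IH by (intro continuous_on_compose) (auto intro: continuous_on_subset)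
  then show ?case by (simp only: funpow_Suc_right)
qed

lemma AE_imp_ex:
  assumes "AE x in M. P x" and "emeasure M (space M) \<noteq> 0"
  shows "\<exists>x. P x"
  using assms by (intro eventually_happens') (simp_all add: ae_filter_eq_bot_iff)

lemma dense_forward_orbit_islimpt:
  fixes x :: "'a::t1_space"
  assumes "infinite (UNIV :: 'a set)" and orbit: "dense_forward_orbit T x"
  shows "x islimpt UNIV"
proof (rule ccontr)
  assume "\<not> x islimpt UNIV"
  then have "open {x}" by (simp add: islimpt_UNIV_iff)
  then obtain q where "q \<ge> 1" and period: "(T ^^ q) x = x"
    using orbit unfolding dense_forward_orbit_def by blast
  define Orb where "Orb = (\<lambda>i. (T ^^ i) x) ` {..<q}"
  have "finite Orb" unfolding Orb_def by simp
  then have "open (- Orb)"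
    by (simp add: finite_imp_closed open_Compl)
  have "- Orb \<noteq> {}"
  proof
    assume "- Orb = {}"
    then have "Orb = UNIV" by blast
    with \<open>finite Orb\<close> assms(1) show False by simp
  qed
  with \<open>open (- Orb)\<close> obtain n where "(T ^^ n) x \<notin> Orb"
    using orbit unfolding dense_forward_orbit_def by blast
  moreover have "(T ^^ n) x = (T ^^ (n mod q)) x"
    using funpow_mod_eq[OF period] by simp
  ultimately show False
    using \<open>q \<ge> 1\<close> unfolding Orb_def by auto
qed

lemma dense_forward_orbit_visits_late:
  fixes x :: "'a::t1_space"
  assumes "x islimpt UNIV" and "continuous_on UNIV T" and orbit: "dense_forward_orbit T x"
    and "open U" and "U \<noteq> {}"
  shows "\<exists>n>m. (T ^^ n) x \<in> U"
proof -
  obtain j where "(T ^^ j) x \<in> U"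
    using orbit assms(4,5) unfolding dense_forward_orbit_def by blast
  define W where "W = (T ^^ j) -` U"
  have "open W"
    unfolding W_def using assms(2,4) continuous_on_funpow[of UNIV T j]
    by (simp add: open_vimage)
  have "x \<in> W" unfolding W_def using \<open>(T ^^ j) x \<in> U\<close> by simp
  define F where "F = (\<lambda>i. (T ^^ i) x) ` {..m}"
  have "finite F" unfolding F_def by simp
  have "infinite W"
    using assms(1) \<open>open W\<close> \<open>x \<in> W\<close> by (simp add: islimpt_eq_acc_point)
  then have "W - F \<noteq> {}"
    using \<open>finite F\<close> by (metis Diff_eq_empty_iff finite_subset)
  moreover have "open (W - F)"
    using \<open>open W\<close> \<open>finite F\<close> by (intro open_Diff finite_imp_closed)
  ultimately obtain k where "(T ^^ k) x \<in> W" and "(T ^^ k) x \<notin> F"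
    using orbit unfolding dense_forward_orbit_def by blast
  have "k > m"
  proof (rule ccontr)
    assume "\<not> k > m"
    then have "(T ^^ k) x \<in> F" unfolding F_def by simp
    with \<open>(T ^^ k) x \<notin> F\<close> show False ..
  qed
  moreover have "(T ^^ (j + k)) x \<in> U"
    using \<open>(T ^^ k) x \<in> W\<close> unfolding W_def by (simp add: funpow_add)
  ultimately show ?thesis
    by (intro exI[of _ "j + k"]) simp
qed

lemma dense_forward_orbit_imp_topologically_transitive:
  fixes T :: "'a::t1_space \<Rightarrow> 'a"
  assumes "infinite (UNIV :: 'a set)" and "continuous_on UNIV T" and "dense_forward_orbit T x"
  shows "topologically_transitive T"
  unfolding topologically_transitive_def
proof (intro allI impI)
  fix U V :: "'a set"
  assume UV: "open U \<and> U \<noteq> {} \<and> open V \<and> V \<noteq> {}"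
  then obtain m where "(T ^^ m) x \<in> V"
    using assms(3) unfolding dense_forward_orbit_def by blast
  obtain n where "n > m" and "(T ^^ n) x \<in> U"
    using dense_forward_orbit_visits_late[OF dense_forward_orbit_islimpt[OF assms(1,3)] assms(2,3)] UV
    by blast
  have "(T ^^ (n - m)) ((T ^^ m) x) = (T ^^ n) x"
    using \<open>n > m\<close> fun_cong[OF funpow_add[of "n - m" m T], of x] by simp
  with \<open>(T ^^ m) x \<in> V\<close> \<open>(T ^^ n) x \<in> U\<close> show "\<exists>n. (T ^^ n) -` U \<inter> V \<noteq> {}"
    by blast
qed

theorem mainTheorem4:
  fixes T :: "'a::metric_space \<Rightarrow> 'a" and \<nu> :: "'a measure"
  assumes "infinite (UNIV :: 'a set)"
    and "locally compact (UNIV :: 'a set)"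
    and "continuous_on UNIV T"
    and "radon_measure \<nu>"
    and "emeasure \<nu> (space \<nu>) \<noteq> 0"
    and "chaotic_wrt \<nu> T"
  shows "topologically_transitive T"
proof -
  obtain x where "dense_forward_orbit T x"
    using AE_imp_ex assms(5,6) by (auto simp: chaotic_wrt_iff_AE_dense_forward_orbit)
  then show ?thesis
    using dense_forward_orbit_imp_topologically_transitive assms(1,3) by blast
qed

end
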